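(* Let $G$ be a periodic group such that the set of primes dividing the orders of elements of $G$ is exactly $\{2,3\}$, for any two elements $g,h\in G$ of orders at most $4$ the order of $gh$ is at most $9$, and the centralizer of every involution of $G$ is a locally cyclic $2$-group. Let $a,b\in\Gamma_2(G)$. Then $(ab)^9=1$. In particular, $G$ has a single conjugacy class of involutions, and $\Gamma_2(G)=a^G=a^{\Gamma_2(G)}$.
   Context: For a positive integer $n$, $\Gamma_n(G)$ denotes the set of elements of $G$ of order exactly $n$. For $a\in G$ and a subset $X\subseteq G$, $a^X=\{x^{-1}ax \mid x\in X\}$. *)

theory Defs
  imports "HOL-Algebra.Algebra"
begin

definition centralizer_elem :: "('a, 'b) monoid_scheme \<Rightarrow> 'a \<Rightarrow> 'a set" where
  "centralizer_elem G x = {y \<in> carrier G. x \<otimes>\<^bsub>G\<^esub> y = y \<otimes>\<^bsub>G\<^esub> x}"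

(* G is periodic: every element has finite order (group.ord G x = 0 encodes infinite order) *)
definition periodic_group :: "('a, 'b) monoid_scheme \<Rightarrow> bool" where
  "periodic_group G \<longleftrightarrow> (\<forall>x \<in> carrier G. group.ord G x > 0)"

definition Gamma :: "('a, 'b) monoid_scheme \<Rightarrow> nat \<Rightarrow> 'a set" where
  "Gamma G n = {x \<in> carrier G. group.ord G x = n}"

definition conj_set :: "('a, 'b) monoid_scheme \<Rightarrow> 'a \<Rightarrow> 'a set \<Rightarrow> 'a set" where
  "conj_set G g S = {inv\<^bsub>G\<^esub> y \<otimes>\<^bsub>G\<^esub> g \<otimes>\<^bsub>G\<^esub> y | y. y \<in> S}"

definition locally_cyclic :: "('a, 'b) monoid_scheme \<Rightarrow> 'a set \<Rightarrow> bool" where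
  "locally_cyclic G H \<longleftrightarrow>
     (\<forall>F. F \<subseteq> H \<and> finite F \<longrightarrow> cyclic_group (subgroup_generated G F))"

definition is_2_group :: "('a, 'b) monoid_scheme \<Rightarrow> 'a set \<Rightarrow> bool" where
  "is_2_group G H \<longleftrightarrow> (\<forall>x \<in> H. \<exists>k::nat. group.ord G x = 2 ^ k)"

end

theory Submission
  imports Defs
begin

text \<open>Two involutions a, b generate a dihedral group. If ab had even order, the involution
z of the cyclic group generated by ab would be inverted, hence centralized, by a and b; then a and b
lie in the locally cyclic group C(z), whose cyclic subgroup generated by a and b has only one
involution, forcing a = b. So ab has odd order, at most 9 and with no prime factor besides 3,
i.e. it divides 9. In a dihedral group of odd order all reflections are conjugate: if ab has order
2m+1, the involution y = a(ab)^(m+1) satisfies yay = b.\<close>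

lemma dvd_diff_if_dvd_double:
  fixes n i j :: int
  assumes "n dvd 2 * i" "n dvd 2 * j" "\<not> n dvd i" "\<not> n dvd j"
  shows "n dvd i - j"
proof -
  obtain p q where p: "2 * i = n * p" and q: "2 * j = n * q"
    using assms(1,2) unfolding dvd_def by blast
  have "odd p" using p assms(3) by (auto elim!: evenE)
  moreover have "odd q" using q assms(4) by (auto elim!: evenE)
  ultimately have "even (p - q)" by simp
  then obtain r where "p - q = 2 * r" ..
  hence "i - j = n * r" using p q by (simp add: algebra_simps)
  thus ?thesis ..
qed

lemma odd_le_9_dvd_9:
  fixes n :: nat
  assumes "odd n" "n \<le> 9" "\<And>p. Factorial_Ring.prime p \<Longrightarrow> p dvd n \<Longrightarrow> p = 2 \<or> p = 3"
  shows "n dvd 9"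
proof -
  have "n \<noteq> 5" "n \<noteq> 7" using assms(3)[of 5] assms(3)[of 7] by auto
  hence "n = 1 \<or> n = 3 \<or> n = 9" using assms(1,2) by presburger
  thus ?thesis by auto
qed

context group begin

lemma ord_eq_2_iff:
  assumes "x \<in> carrier G"
  shows "ord x = 2 \<longleftrightarrow> x \<noteq> \<one> \<and> x \<otimes> x = \<one>"
proof -
  have "x \<otimes> x = \<one> \<longleftrightarrow> ord x dvd 2"
    using assms by (simp add: numeral_2_eq_2 flip: pow_eq_id)
  moreover have "x = \<one> \<longleftrightarrow> ord x = 1" using assms ord_eq_1 by blast
  moreover have "n dvd 2 \<longleftrightarrow> n = 1 \<or> n = 2" for n :: nat
    using prime_nat_iff[of 2] by auto
  ultimately show ?thesis by auto
qed

lemma conj_nat_pow: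
  assumes "x \<in> carrier G" "y \<in> carrier G"
  shows "inv y \<otimes> x [^] (k::nat) \<otimes> y = (inv y \<otimes> x \<otimes> y) [^] k"
proof (induction k)
  case 0
  show ?case using assms by simp
next
  case (Suc k)
  have "inv y \<otimes> x [^] Suc k \<otimes> y = (inv y \<otimes> x [^] k \<otimes> y) \<otimes> (inv y \<otimes> x \<otimes> y)"
    using assms by (simp add: m_assoc flip: m_assoc[of y "inv y"])
  with Suc show ?case by simp
qed

lemma ord_conj:
  assumes "x \<in> carrier G" "y \<in> carrier G"
  shows "ord (inv y \<otimes> x \<otimes> y) = ord x"
proof -
  have conj_eq_one: "inv y \<otimes> z \<otimes> y = \<one> \<longleftrightarrow> z = \<one>" if "z \<in> carrier G" for z
  proof
    assume "inv y \<otimes> z \<otimes> y = \<one>"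
    hence "y \<otimes> (inv y \<otimes> z \<otimes> y) \<otimes> inv y = \<one>" using assms by simp
    thus "z = \<one>" using assms that by (simp add: m_assoc flip: m_assoc[of y "inv y"])
  qed (use assms in simp)
  have "(inv y \<otimes> x \<otimes> y) [^] n = \<one> \<longleftrightarrow> x [^] n = \<one>" for n :: nat
    using assms by (simp add: conj_eq_one flip: conj_nat_pow)
  thus ?thesis using assms by (simp add: ord_unique pow_eq_id)
qed

lemma involutions_invert_pow:
  assumes c: "c \<in> carrier G" "c \<otimes> c = \<one>" and d: "d \<in> carrier G" "d \<otimes> d = \<one>"
  shows "c \<otimes> (c \<otimes> d) [^] (k::nat) \<otimes> c = inv ((c \<otimes> d) [^] k)"
proof -
  have inv_c: "inv c = c" and inv_d: "inv d = d" using c d inv_equality by blast+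
  have "inv c \<otimes> (c \<otimes> d) \<otimes> c = inv (c \<otimes> d)"
    using c d by (simp add: inv_c inv_d inv_mult_group m_assoc flip: m_assoc[of c c])
  hence "c \<otimes> (c \<otimes> d) [^] k \<otimes> c = inv (c \<otimes> d) [^] k"
    using c d conj_nat_pow[of "c \<otimes> d" c k] by (simp add: inv_c)
  thus ?thesis using c d by (simp add: nat_pow_inv)
qed

lemma cyclic_group_involution_unique:
  assumes "cyclic_group G"
    and x: "x \<in> carrier G" "x \<noteq> \<one>" "x \<otimes> x = \<one>"
    and y: "y \<in> carrier G" "y \<noteq> \<one>" "y \<otimes> y = \<one>"
  shows "x = y"
proof -
  obtain g where g: "g \<in> carrier G" and gen: "carrier G = range (\<lambda>n::int. g [^] n)"
    using assms(1) cyclic_group by blast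
  obtain i j :: int where i: "x = g [^] i" and j: "y = g [^] j"
    using x(1) y(1) unfolding gen by blast
  have "g [^] (2 * i) = \<one>" "g [^] (2 * j) = \<one>"
    using int_pow_mult[OF g, of i i] int_pow_mult[OF g, of j j] x(3) y(3)
    by (simp_all add: i j flip: mult_2)
  moreover have "g [^] i \<noteq> \<one>" "g [^] j \<noteq> \<one>"
    using x(2) y(2) by (simp_all add: i j)
  ultimately have "int (ord g) dvd j - i"
    using dvd_diff_if_dvd_double int_pow_eq_id[OF g] by blast
  thus ?thesis using g by (simp add: i j int_pow_eq)
qed

lemma locally_cyclic_involution_unique:
  assumes "locally_cyclic G S" "S \<subseteq> carrier G"
    and "x \<in> S" "ord x = 2" "y \<in> S" "ord y = 2"
  shows "x = y"
proof -
  let ?H = "subgroup_generated G {x, y}"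
  have cyc: "cyclic_group ?H" using assms(1,3,5) unfolding locally_cyclic_def by auto
  have xH: "x \<in> carrier ?H" and yH: "y \<in> carrier ?H"
    using assms(2,3,5) by (auto simp: carrier_subgroup_generated intro: generate.incl)
  have "x \<noteq> \<one> \<and> x \<otimes> x = \<one>" "y \<noteq> \<one> \<and> y \<otimes> y = \<one>"
    using assms(2-6) ord_eq_2_iff by auto
  then show ?thesis
    by (intro group.cyclic_group_involution_unique[OF group_subgroup_generated cyc xH _ _ yH]) auto
qed

lemma odd_ord_mult_involutions:
  assumes cent: "\<And>t. t \<in> carrier G \<Longrightarrow> ord t = 2 \<Longrightarrow> locally_cyclic G (centralizer_elem G t)"
    and a: "a \<in> carrier G" "ord a = 2" and b: "b \<in> carrier G" "ord b = 2"
    and finite_ord: "ord (a \<otimes> b) > 0" \<comment> \<open>ord is 0 for elements of infinite order\<close>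
  shows "odd (ord (a \<otimes> b))"
proof
  define c where "c = a \<otimes> b"
  assume "even (ord (a \<otimes> b))"
  then obtain m where m: "ord c = 2 * m" unfolding c_def ..
  have c: "c \<in> carrier G" using a b c_def by simp
  have aa: "a \<otimes> a = \<one>" and bb: "b \<otimes> b = \<one>" using a b ord_eq_2_iff by auto
  define z where "z = c [^] m"
  have z: "z \<in> carrier G" using c z_def by simp
  have zz: "z \<otimes> z = \<one>"
    using c by (simp add: z_def nat_pow_mult flip: mult_2 m)
  have "z \<noteq> \<one>"
  proof
    assume "z = \<one>"
    hence "2 * m dvd m" using c by (simp add: z_def pow_eq_id flip: m)
    moreover have "m > 0" using finite_ord m by (simp add: c_def)
    ultimately show False by (simp add: nat_dvd_not_less)
  qed
  hence ord_z: "ord z = 2" using z zz ord_eq_2_iff by blast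
  have "inv z = z" using z zz inv_equality by blast
  hence "a \<otimes> z \<otimes> a = z"
    using involutions_invert_pow[OF a(1) aa b(1) bb, of m] by (simp add: z_def c_def)
  moreover have "a \<otimes> z = (a \<otimes> z \<otimes> a) \<otimes> a" using a z aa by (simp add: m_assoc)
  ultimately have az: "a \<otimes> z = z \<otimes> a" by simp
  have cz: "c \<otimes> z = z \<otimes> c" using c by (simp add: z_def flip: nat_pow_Suc2)
  have bz: "b \<otimes> z = z \<otimes> b"
  proof -
    have b_eq: "b = a \<otimes> c" using a b aa by (simp add: c_def flip: m_assoc)
    have "b \<otimes> z = a \<otimes> z \<otimes> c" using a c z by (simp add: b_eq m_assoc cz)
    also have "\<dots> = z \<otimes> b" using a c z by (simp add: b_eq m_assoc az)
    finally show ?thesis .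
  qed
  have "a \<in> centralizer_elem G z" "b \<in> centralizer_elem G z"
    and "centralizer_elem G z \<subseteq> carrier G"
    using a b az bz unfolding centralizer_elem_def by auto
  hence "a = b"
    using locally_cyclic_involution_unique[OF cent[OF z ord_z]] a(2) b(2) by blast
  hence "ord c = 1" using aa by (simp add: c_def)
  thus False using m by arith
qed

lemma involutions_conjugate_by_involution:
  assumes c: "c \<in> carrier G" "ord c = 2" and d: "d \<in> carrier G" "ord d = 2"
    and odd: "odd (ord (c \<otimes> d))"
  shows "\<exists>y \<in> carrier G. ord y = 2 \<and> d = inv y \<otimes> c \<otimes> y"
proof -
  define e where "e = c \<otimes> d"
  have e: "e \<in> carrier G" using c d e_def by simp
  have cc: "c \<otimes> c = \<one>" and dd: "d \<otimes> d = \<one>" using c d ord_eq_2_iff by auto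
  obtain m where m: "ord e = 2 * m + 1" using odd unfolding e_def by (elim oddE)
  define x where "x = e [^] (m + 1)"
  have x: "x \<in> carrier G" using e x_def by simp
  have cxc: "c \<otimes> x \<otimes> c = inv x"
    unfolding x_def e_def by (rule involutions_invert_pow[OF c(1) cc d(1) dd])
  have "x \<otimes> x = e [^] (m + 1 + (m + 1))" unfolding x_def by (rule nat_pow_mult[OF e])
  also have "m + 1 + (m + 1) = ord e + 1" using m by simp
  also have "e [^] (ord e + 1) = e" using e by simp
  finally have xx: "x \<otimes> x = e" .
  define y where "y = c \<otimes> x"
  have y: "y \<in> carrier G" using c x y_def by simp
  have "y \<otimes> y = (c \<otimes> x \<otimes> c) \<otimes> x" using c x by (simp add: y_def m_assoc)
  hence yy: "y \<otimes> y = \<one>" using x by (simp add: cxc)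
  have "y \<otimes> c \<otimes> y = c \<otimes> (x \<otimes> x)"
    using c x cc by (simp add: y_def m_assoc flip: m_assoc[of c c])
  hence ycy: "y \<otimes> c \<otimes> y = d"
    using c d cc by (simp add: xx e_def flip: m_assoc[of c c])
  have "y \<noteq> \<one>"
  proof
    assume "y = \<one>"
    hence "d = c" using ycy c by simp
    hence "x = \<one>" using cc by (simp add: x_def e_def)
    thus False using \<open>y = \<one>\<close> c(1) c(2) ord_eq_2_iff by (simp add: y_def)
  qed
  hence "ord y = 2" using y yy ord_eq_2_iff by blast
  moreover have "inv y = y" using y yy inv_equality by blast
  ultimately show ?thesis using y ycy by auto
qed

lemma conj_set_subset_Gamma:
  assumes "a \<in> Gamma G n" "S \<subseteq> carrier G"
  shows "conj_set G a S \<subseteq> Gamma G n"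
  using assms ord_conj unfolding conj_set_def Gamma_def by auto

end

theorem lemma1:
  fixes G (structure) and a b
  assumes grp: "group G"
    and per: "periodic_group G"
    and spec: "{p::nat. Factorial_Ring.prime p \<and> (\<exists>x \<in> carrier G. p dvd group.ord G x)} = {2, 3}"
    and ord_prod: "\<forall>g \<in> carrier G. \<forall>h \<in> carrier G.
                    group.ord G g \<le> 4 \<longrightarrow> group.ord G h \<le> 4 \<longrightarrow> group.ord G (g \<otimes> h) \<le> 9"
    and cent: "\<forall>t \<in> Gamma G 2. subgroup (centralizer_elem G t) G
                  \<and> locally_cyclic G (centralizer_elem G t) \<and> is_2_group G (centralizer_elem G t)"
    and a: "a \<in> Gamma G 2" and b: "b \<in> Gamma G 2"
  shows "(a \<otimes> b) [^] (9::nat) = \<one>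
     \<and> (\<forall>c \<in> Gamma G 2. \<forall>d \<in> Gamma G 2. \<exists>x \<in> carrier G. d = inv x \<otimes> c \<otimes> x)
     \<and> Gamma G 2 = conj_set G a (carrier G)
     \<and> Gamma G 2 = conj_set G a (Gamma G 2)"
proof -
  interpret group G by (rule grp)
  have Gamma_2: "Gamma G 2 = {x \<in> carrier G. ord x = 2}" by (simp add: Gamma_def)
  have odd: "odd (ord (c \<otimes> d))" if "c \<in> Gamma G 2" "d \<in> Gamma G 2" for c d
    using odd_ord_mult_involutions[of c d] that cent per
    by (auto simp: Gamma_2 periodic_group_def)
  have conj: "\<exists>y \<in> Gamma G 2. d = inv y \<otimes> c \<otimes> y" if "c \<in> Gamma G 2" "d \<in> Gamma G 2" for c d
    using involutions_conjugate_by_involution odd[OF that] that by (auto simp: Gamma_2)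
  have "ord (a \<otimes> b) dvd 9"
  proof (rule odd_le_9_dvd_9)
    show "ord (a \<otimes> b) \<le> 9" using ord_prod a b by (simp add: Gamma_2)
    show "p = 2 \<or> p = 3" if "Factorial_Ring.prime p" "p dvd ord (a \<otimes> b)" for p
      using spec that a b by (auto simp: Gamma_2)
  qed (rule odd[OF a b])
  hence "(a \<otimes> b) [^] (9::nat) = \<one>" using a b by (simp add: Gamma_2 pow_eq_id)
  moreover have "\<forall>c \<in> Gamma G 2. \<forall>d \<in> Gamma G 2. \<exists>x \<in> carrier G. d = inv x \<otimes> c \<otimes> x"
    using conj unfolding Gamma_2 by blast
  moreover have "Gamma G 2 \<subseteq> conj_set G a (Gamma G 2)"
    using conj[OF a] unfolding conj_set_def by blast
  moreover have "conj_set G a (Gamma G 2) \<subseteq> conj_set G a (carrier G)"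
    unfolding conj_set_def Gamma_2 by blast
  moreover have "conj_set G a (carrier G) \<subseteq> Gamma G 2"
    using conj_set_subset_Gamma[OF a] by simp
  ultimately show ?thesis by blast
qed

end
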